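(* Fix an integer horizon $T\ge 1$ and positive constants $s,k_u,m,\delta_1,\delta_2,\gamma,q,k_w,n,A,M_1$ with $0<m<1$, $0<n<1$, and constants $M_2\ge 0$, $0<N<1$. Consider the discrete-time controlled system (Model A) \[ \begin{aligned} u_{t+1}&=u_t\Big[s\Big(1-\tfrac{u_t}{k_u}\Big)\Big(\tfrac{u_t}{k_u}-m\Big)+1\Big](1-\delta_1 v_t)+h_t w_t\Big[q\Big(1-\tfrac{w_t}{k_w}\Big)\Big(\tfrac{w_t}{k_w}-n\Big)+1\Big],\\ v_{t+1}&=\Big(v_t+u_t\Big[s\Big(1-\tfrac{u_t}{k_u}\Big)\Big(\tfrac{u_t}{k_u}-m\Big)+1\Big]\delta_2 v_t\Big)(1-\gamma),\\ w_{t+1}&=(w_t-h_t w_t)\Big[q\Big(1-\tfrac{w_t}{k_w}\Big)\Big(\tfrac{w_t}{k_w}-n\Big)+1\Big], \end{aligned} \qquad t=0,1,\dots,T-1, \] with given initial values $u_0,v_0,w_0$, where the control ${\bf h}=(h_0,\dots,h_{T-1})$ ranges over the control set $\Omega=\{{\bf h}: 0\le h_t\le A,\ t=0,\dots,T-1\}$, and the objective functional to be maximized is \[ J({\bf h})=u_T+N w_T-\sum_{t=0}^{T-1}\big(M_1 h_t^2+M_2 h_t\big). \] Let ${\bf h}^\ast=(h^\ast_0,\dots,h^\ast_{T-1})\in\Omega$ be an optimal control with corresponding state solutions ${\bf u}^\ast=(u^\ast_0,\dots,u^\ast_T)$, ${\bf v}^\ast=(v^\ast_0,\dots,v^\ast_T)$,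 ${\bf w}^\ast=(w^\ast_0,\dots,w^\ast_T)$. Then there exist adjoint vectors $\lambda_{\bf u}=(\lambda_{u,0},\dots,\lambda_{u,T})$, $\lambda_{\bf v}=(\lambda_{v,0},\dots,\lambda_{v,T})$, $\lambda_{\bf w}=(\lambda_{w,0},\dots,\lambda_{w,T})$ satisfying, for $t=0,\dots,T-1$, \[ \begin{aligned} \lambda_{u,t}=&\Big((1-\delta_1 v^\ast_t)\lambda_{u,t+1}+\delta_2 v^\ast_t(1-\gamma)\lambda_{v,t+1}\Big)\Big[s\Big(1-\tfrac{u^\ast_t}{k_u}\Big)\Big(\tfrac{u^\ast_t}{k_u}-m\Big)+1\Big]\\ &+\Big(u^\ast_t(1-\delta_1 v^\ast_t)\lambda_{u,t+1}+u^\ast_t\delta_2 v^\ast_t(1-\gamma)\lambda_{v,t+1}\Big)\Big[\tfrac{s}{k_u}\Big(1-\tfrac{u^\ast_t}{k_u}\Big)-\tfrac{s}{k_u}\Big(\tfrac{u^\ast_t}{k_u}-m\Big)\Big],\\ \lambda_{v,t}=&-\lambda_{u,t+1}u^\ast_t\Big[s\Big(1-\tfrac{u^\ast_t}{k_u}\Big)\Big(\tfrac{u^\ast_t}{k_u}-m\Big)+1\Big]\delta_1\\ &+\lambda_{v,t+1}\Big[1+u^\ast_t\Big(s\Big(1-\tfrac{u^\ast_t}{k_u}\Big)\Big(\tfrac{u^\ast_t}{k_u}-m\Big)+1\Big)\delta_2\Big](1-\gamma),\\ \lambda_{w,t}=&\Big(h^\ast_t\lambda_{u,t+1}+(1-h^\ast_t)\lambda_{w,t+1}\Big)\Big[q\Big(1-\tfrac{w^\ast_t}{k_w}\Big)\Big(\tfrac{w^\ast_t}{k_w}-n\Big)+1\Big]\\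 &+w^\ast_t\Big(h^\ast_t\lambda_{u,t+1}+(1-h^\ast_t)\lambda_{w,t+1}\Big)\Big[\tfrac{q}{k_w}\Big(1-\tfrac{w^\ast_t}{k_w}\Big)-\tfrac{q}{k_w}\Big(\tfrac{w^\ast_t}{k_w}-n\Big)\Big], \end{aligned} \] with transversality conditions $\lambda_{u,T}=1$, $\lambda_{v,T}=0$, $\lambda_{w,T}=N$. Moreover, for $t=0,\dots,T-1$, \[ h^\ast_t=\min\left\{A,\ \max\left\{0,\ \frac{(\lambda_{u,t+1}-\lambda_{w,t+1})\Big[q\Big(1-\tfrac{w^\ast_t}{k_w}\Big)\Big(\tfrac{w^\ast_t}{k_w}-n\Big)+1\Big]w^\ast_t-M_2}{2M_1}\right\}\right\}. \]
   Context: Here $u_t$, $v_t$, $w_t$ denote the prey (target), predator and reserve population sizes at time step $t$; $h_t$ is the proportion of the reserve population translocated to the target population at step $t$. The parameters: $s$, $q$ are intrinsic growth rates of prey and reserve, $k_u$, $k_w$ their carrying capacities, $m,n\in(0,1)$ strong Allee constants, $\delta_1$ the consumption rate, $\delta_2$ the attack rate, $\gamma$ the predator decay rate, $A$ the maximum control effort, $M_1>0$, $M_2\ge 0$ cost constants and $N\in(0,1)$ the weight on the final reserve population. In the paper's setting the initial reserve population satisfies $w_0>nk_w$ and the initial prey population is below its growth threshold. *)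

theory Defs
  imports Complex_Main
begin

definition growth :: "real \<Rightarrow> real \<Rightarrow> real \<Rightarrow> real \<Rightarrow> real" where
  "growth r k a x = r * (1 - x / k) * (x / k - a) + 1"

primrec modelA ::
  "real \<Rightarrow> real \<Rightarrow> real \<Rightarrow> real \<Rightarrow> real \<Rightarrow> real \<Rightarrow> real \<Rightarrow> real \<Rightarrow> real \<Rightarrow>
   real \<Rightarrow> real \<Rightarrow> real \<Rightarrow> (nat \<Rightarrow> real) \<Rightarrow> nat \<Rightarrow> real \<times> real \<times> real" where
  "modelA s ku m d1 d2 g q kw n u0 v0 w0 h 0 = (u0, v0, w0)"
| "modelA s ku m d1 d2 g q kw n u0 v0 w0 h (Suc t) =
     (let (u, v, w) = modelA s ku m d1 d2 g q kw n u0 v0 w0 h t in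
       (u * growth s ku m u * (1 - d1 * v) + h t * w * growth q kw n w,
        (v + u * growth s ku m u * d2 * v) * (1 - g),
        (w - h t * w) * growth q kw n w))"

definition stU where "stU s ku m d1 d2 g q kw n u0 v0 w0 h t = fst (modelA s ku m d1 d2 g q kw n u0 v0 w0 h t)"
definition stV where "stV s ku m d1 d2 g q kw n u0 v0 w0 h t = fst (snd (modelA s ku m d1 d2 g q kw n u0 v0 w0 h t))"
definition stW where "stW s ku m d1 d2 g q kw n u0 v0 w0 h t = snd (snd (modelA s ku m d1 d2 g q kw n u0 v0 w0 h t))"

definition controlset :: "nat \<Rightarrow> real \<Rightarrow> (nat \<Rightarrow> real) set" where
  "controlset T A = {h. \<forall>t<T. 0 \<le> h t \<and> h t \<le> A}"

definition objJ where
  "objJ s ku m d1 d2 g q kw n u0 v0 w0 T N M1 M2 h =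
     stU s ku m d1 d2 g q kw n u0 v0 w0 h T + N * stW s ku m d1 d2 g q kw n u0 v0 w0 h T
     - (\<Sum>t<T. M1 * (h t)^2 + M2 * h t)"

end

theory Submission
  imports Defs "HOL-Analysis.Euclidean_Space"
begin

text \<open>Freeze all controls except \<open>h\<^sub>t\<close> and view \<open>J\<close> as a function of the
  single value \<open>h\<^sub>t \<in> [0, A]\<close>. The payoff \<open>u\<^sub>T + N w\<^sub>T\<close> is the inner product
  of the final state with \<open>(1, 0, N)\<close>, so by the chain rule along the trajectory its
  gradient with respect to the state at time \<open>t\<close> is obtained from \<open>(1, 0, N)\<close> by
  applying the transposed Jacobians of the later steps: this backward recursion is the
  adjoint system. Differentiating one step of Model A in \<open>h\<^sub>t\<close> then shows that
  \<open>J'(h\<^sub>t)\<close> is \<open>(\<lambda>\<^sub>u - \<lambda>\<^sub>w)(t+1) G(w\<^sub>t) w\<^sub>t - M\<^sub>2 - 2 M\<^sub>1 h\<^sub>t\<close>,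
  affine with slope \<open>-2 M\<^sub>1 < 0\<close>; the one-sided first-order conditions at a maximiser
  over \<open>[0, A]\<close> then force \<open>h\<^sub>t\<close> to be the projection of its zero onto \<open>[0, A]\<close>.
  No sign condition on the parameters other than \<open>M\<^sub>1 > 0\<close> is needed.\<close>

lemma interval_max_deriv_nonpos:
  fixes f :: "real \<Rightarrow> real"
  assumes deriv: "(f has_real_derivative D) (at x)" and "x < b"
    and max: "\<And>y. x \<le> y \<Longrightarrow> y \<le> b \<Longrightarrow> f y \<le> f x"
  shows "D \<le> 0"
proof (rule ccontr)
  assume "\<not> D \<le> 0"
  then obtain d where "d > 0" and inc: "\<And>h. 0 < h \<Longrightarrow> h < d \<Longrightarrow> f x < f (x + h)"
    using DERIV_pos_inc_right[OF deriv] by force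
  define h where "h = min (d / 2) (b - x)"
  have "0 < h" "h < d" "x + h \<le> b"
    using \<open>d > 0\<close> \<open>x < b\<close> by (auto simp: h_def)
  then show False
    using inc max[of "x + h"] by fastforce
qed

lemma interval_max_deriv_nonneg:
  fixes f :: "real \<Rightarrow> real"
  assumes deriv: "(f has_real_derivative D) (at x)" and "a < x"
    and max: "\<And>y. a \<le> y \<Longrightarrow> y \<le> x \<Longrightarrow> f y \<le> f x"
  shows "D \<ge> 0"
proof (rule ccontr)
  assume "\<not> D \<ge> 0"
  then obtain d where "d > 0" and dec: "\<And>h. 0 < h \<Longrightarrow> h < d \<Longrightarrow> f x < f (x - h)"
    using DERIV_neg_dec_left[OF deriv] by force
  define h where "h = min (d / 2) (x - a)"
  have "0 < h" "h < d" "a \<le> x - h"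
    using \<open>d > 0\<close> \<open>a < x\<close> by (auto simp: h_def)
  then show False
    using dec max[of "x - h"] by fastforce
qed

lemma interval_argmax_eq_clamp:
  fixes f :: "real \<Rightarrow> real"
  assumes deriv: "(f has_real_derivative M * (X - x)) (at x)" and "M > 0"
    and "a \<le> x" "x \<le> b"
    and max: "\<And>y. a \<le> y \<Longrightarrow> y \<le> b \<Longrightarrow> f y \<le> f x"
  shows "x = min b (max a X)"
proof -
  have "X \<le> x" if "x < b"
    using interval_max_deriv_nonpos[OF deriv that] max \<open>a \<le> x\<close> \<open>M > 0\<close>
    by (auto simp: mult_le_0_iff)
  moreover have "x \<le> X" if "a < x"
    using interval_max_deriv_nonneg[OF deriv that] max \<open>x \<le> b\<close> \<open>M > 0\<close>
    by (auto simp: zero_le_mult_iff)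
  ultimately show ?thesis
    using \<open>a \<le> x\<close> \<open>x \<le> b\<close> by linarith
qed

fun flow :: "(nat \<Rightarrow> 'a \<Rightarrow> 'a) \<Rightarrow> nat \<Rightarrow> nat \<Rightarrow> 'a \<Rightarrow> 'a" where
  "flow f t 0 y = y"
| "flow f t (Suc k) y = flow f (Suc t) k (f t y)"

lemma flow_cong:
  "(\<And>i. t \<le> i \<Longrightarrow> i < t + k \<Longrightarrow> f i = f' i) \<Longrightarrow> flow f t k = flow f' t k"
proof (induction k arbitrary: t)
  case (Suc k)
  then show ?case by (auto simp: fun_eq_iff)
qed (simp add: fun_eq_iff)

lemma flow_trajectory:
  "(\<And>i. t \<le> i \<Longrightarrow> i < t + k \<Longrightarrow> x (Suc i) = f i (x i)) \<Longrightarrow> flow f t k (x t) = x (t + k)"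
proof (induction k arbitrary: t)
  case (Suc k)
  have "flow f t (Suc k) (x t) = flow f (Suc t) k (x (Suc t))"
    using Suc.prems by simp
  also have "\<dots> = x (t + Suc k)"
    using Suc.prems by (subst Suc.IH) auto
  finally show ?case .
qed simp

lemma has_derivative_flow_adjoint:
  fixes f :: "nat \<Rightarrow> 'a::real_normed_vector \<Rightarrow> 'a" and \<Phi> :: "'a \<Rightarrow> 'b::real_normed_vector"
  assumes trajectory: "\<And>i. t \<le> i \<Longrightarrow> i < t + k \<Longrightarrow> x (Suc i) = f i (x i)"
    and deriv: "\<And>i. t \<le> i \<Longrightarrow> i < t + k \<Longrightarrow> (f i has_derivative Df i) (at (x i))"
    and adjoint: "\<And>i d. t \<le> i \<Longrightarrow> i < t + k \<Longrightarrow> L (Suc i) (Df i d) = L i d"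
    and terminal: "(\<Phi> has_derivative L (t + k)) (at (x (t + k)))"
  shows "((\<lambda>y. \<Phi> (flow f t k y)) has_derivative L t) (at (x t))"
  using assms
proof (induction k arbitrary: t)
  case (Suc k)
  have "((\<lambda>y. \<Phi> (flow f (Suc t) k y)) has_derivative L (Suc t)) (at (f t (x t)))"
    using Suc.IH[of "Suc t"] Suc.prems by (simp add: le_imp_less_Suc)
  from has_derivative_compose[OF Suc.prems(2) this] Suc.prems(3)
  show ?case by (simp add: fun_eq_iff)
qed simp

definition growth_deriv :: "real \<Rightarrow> real \<Rightarrow> real \<Rightarrow> real \<Rightarrow> real" where
  "growth_deriv r k a x = r / k * (1 - x / k) - r / k * (x / k - a)"

lemma has_derivative_growth [derivative_intros]:
  assumes "(f has_derivative f') (at x within S)"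
  shows "((\<lambda>y. growth r k a (f y)) has_derivative (\<lambda>d. growth_deriv r k a (f x) * f' d)) (at x within S)"
proof -
  have "(growth r k a has_real_derivative growth_deriv r k a (f x)) (at (f x))"
    unfolding growth_def[abs_def] growth_deriv_def divide_inverse
    by (auto intro!: derivative_eq_intros simp: algebra_simps)
  from has_derivative_compose[OF assms this[unfolded has_field_derivative_def]]
  show ?thesis by (simp add: ac_simps)
qed

lemma inner_triple: "inner (a, b, c) x = a * fst x + b * fst (snd x) + c * snd (snd x)"
  by (cases x) simp

context
  fixes s ku m d1 d2 g q kw n :: real
begin

definition modelA_step :: "real \<Rightarrow> real \<times> real \<times> real \<Rightarrow> real \<times> real \<times> real" where
  "modelA_step c = (\<lambda>(u, v, w).
     (u * growth s ku m u * (1 - d1 * v) + c * w * growth q kw n w,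
      (v + u * growth s ku m u * d2 * v) * (1 - g),
      (w - c * w) * growth q kw n w))"

definition modelA_jacobian ::
    "real \<Rightarrow> real \<times> real \<times> real \<Rightarrow> real \<times> real \<times> real \<Rightarrow> real \<times> real \<times> real" where
  "modelA_jacobian c = (\<lambda>(u, v, w) (du, dv, dw).
     let gu = growth s ku m u + u * growth_deriv s ku m u;
         gw = growth q kw n w + w * growth_deriv q kw n w
     in (gu * (1 - d1 * v) * du - u * growth s ku m u * d1 * dv + c * gw * dw,
         (gu * d2 * v * du + (1 + u * growth s ku m u * d2) * dv) * (1 - g),
         (1 - c) * gw * dw))"

definition modelA_costep ::
    "real \<Rightarrow> real \<times> real \<times> real \<Rightarrow> real \<times> real \<times> real \<Rightarrow> real \<times> real \<times> real" where
  "modelA_costep c = (\<lambda>(u, v, w) (lu, lv, lw).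
     (((1 - d1 * v) * lu + d2 * v * (1 - g) * lv) * growth s ku m u
        + (u * (1 - d1 * v) * lu + u * d2 * v * (1 - g) * lv) * growth_deriv s ku m u,
      - lu * u * growth s ku m u * d1 + lv * (1 + u * growth s ku m u * d2) * (1 - g),
      (c * lu + (1 - c) * lw) * growth q kw n w
        + w * (c * lu + (1 - c) * lw) * growth_deriv q kw n w))"

lemma has_derivative_modelA_step: "(modelA_step c has_derivative modelA_jacobian c x) (at x)"
  unfolding modelA_step_def case_prod_unfold
  by (rule has_derivative_eq_rhs, (rule derivative_intros)+)
    (auto simp: fun_eq_iff modelA_jacobian_def split_beta algebra_simps)

lemma has_derivative_modelA_step_control:
  "((\<lambda>c. modelA_step c (u, v, w)) has_derivative
     (\<lambda>e. e *\<^sub>R (w * growth q kw n w, 0, - w * growth q kw n w))) (at c)"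
  unfolding modelA_step_def prod.case
  by (rule has_derivative_eq_rhs, (rule derivative_intros)+) (auto simp: fun_eq_iff algebra_simps)

lemma inner_modelA_jacobian:
  "inner L (modelA_jacobian c x d) = inner (modelA_costep c x L) d"
  by (cases x, cases d, cases L) (simp add: modelA_jacobian_def modelA_costep_def algebra_simps)

context
  fixes u0 v0 w0 :: real
begin

abbreviation state :: "(nat \<Rightarrow> real) \<Rightarrow> nat \<Rightarrow> real \<times> real \<times> real" where
  "state h \<equiv> modelA s ku m d1 d2 g q kw n u0 v0 w0 h"

lemma modelA_Suc_step [simp]: "state h (Suc t) = modelA_step (h t) (state h t)"
  by (cases "state h t") (simp add: modelA_step_def)

declare modelA.simps(2) [simp del]

lemma modelA_cong: "(\<And>i. i < t \<Longrightarrow> h i = h' i) \<Longrightarrow> state h t = state h' t"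
  by (induction t) simp_all

function modelA_costate :: "(nat \<Rightarrow> real) \<Rightarrow> nat \<Rightarrow> real \<Rightarrow> nat \<Rightarrow> real \<times> real \<times> real" where
  "modelA_costate h T N t =
     (if t < T then modelA_costep (h t) (state h t) (modelA_costate h T N (Suc t)) else (1, 0, N))"
  by auto
termination by (relation "measure (\<lambda>(h, T, N, t). T - t)") auto

declare modelA_costate.simps [simp del]

lemma modelA_costate_terminal: "modelA_costate h T N T = (1, 0, N)"
  by (simp add: modelA_costate.simps)

lemma modelA_costate_step:
  "t < T \<Longrightarrow>
    modelA_costate h T N t = modelA_costep (h t) (state h t) (modelA_costate h T N (Suc t))"
  by (simp add: modelA_costate.simps[of h T N t])

lemma modelA_costate_gradient:
  assumes "t \<le> T"
  shows "((\<lambda>y. inner (1, 0, N) (flow (\<lambda>i. modelA_step (h i)) t (T - t) y)) has_derivative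
           inner (modelA_costate h T N t)) (at (state h t))"
proof (rule has_derivative_flow_adjoint[where Df = "\<lambda>i. modelA_jacobian (h i) (state h i)"])
  show "state h (Suc i) = modelA_step (h i) (state h i)" for i
    by (rule modelA_Suc_step)
  show "(modelA_step (h i) has_derivative modelA_jacobian (h i) (state h i)) (at (state h i))" for i
    by (rule has_derivative_modelA_step)
  show "inner (modelA_costate h T N (Suc i)) (modelA_jacobian (h i) (state h i) d)
      = inner (modelA_costate h T N i) d" if "i < t + (T - t)" for i d
    using that assms by (simp add: inner_modelA_jacobian modelA_costate_step)
  show "(inner (1, 0, N) has_derivative inner (modelA_costate h T N (t + (T - t))))
      (at (state h (t + (T - t))))"
    using has_derivative_inner_right[OF has_derivative_ident, of "(1, 0, N)"] assms
    by (simp add: modelA_costate_terminal)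
qed

lemma objJ_eq_inner:
  "objJ s ku m d1 d2 g q kw n u0 v0 w0 T N M1 M2 h
     = inner (1, 0, N) (state h T) - (\<Sum>i<T. M1 * (h i)^2 + M2 * h i)"
  by (simp add: objJ_def stU_def stW_def inner_triple)

lemma modelA_update_control:
  assumes "t < T"
  shows "state (h(t := c)) T
    = flow (\<lambda>i. modelA_step (h i)) (Suc t) (T - Suc t) (modelA_step c (state h t))"
proof -
  have "state (h(t := c)) T
      = flow (\<lambda>i. modelA_step ((h(t := c)) i)) (Suc t) (T - Suc t) (state (h(t := c)) (Suc t))"
    using flow_trajectory[where x = "state (h(t := c))" and f = "\<lambda>i. modelA_step ((h(t := c)) i)"
        and t = "Suc t" and k = "T - Suc t"] assms
    by simp
  also have "\<dots> = flow (\<lambda>i. modelA_step (h i)) (Suc t) (T - Suc t) (state (h(t := c)) (Suc t))"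
    using flow_cong[where f = "\<lambda>i. modelA_step ((h(t := c)) i)" and f' = "\<lambda>i. modelA_step (h i)"
        and t = "Suc t" and k = "T - Suc t"] by simp
  also have "state (h(t := c)) (Suc t) = modelA_step c (state h t)"
    using modelA_cong[of t "h(t := c)" h] by simp
  finally show ?thesis .
qed

lemma modelA_optimal_control:
  assumes "M1 > 0" and hs: "hs \<in> controlset T A"
    and opt: "\<forall>h \<in> controlset T A.
               objJ s ku m d1 d2 g q kw n u0 v0 w0 T N M1 M2 h
                 \<le> objJ s ku m d1 d2 g q kw n u0 v0 w0 T N M1 M2 hs"
    and "t < T"
    and state: "state hs t = (u, v, w)"
    and costate: "modelA_costate hs T N (Suc t) = (lu, lv, lw)"
  shows "hs t = min A (max 0 (((lu - lw) * growth q kw n w * w - M2) / (2 * M1)))"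
proof -
  define cost where "cost c = M1 * c^2 + M2 * c" for c
  define J where "J c = objJ s ku m d1 d2 g q kw n u0 v0 w0 T N M1 M2 (hs(t := c))" for c
  define R where "R = (\<Sum>i \<in> {..<T} - {t}. cost (hs i))"
  define \<Psi> where
    "\<Psi> = (\<lambda>y. inner (1, 0, N) (flow (\<lambda>i. modelA_step (hs i)) (Suc t) (T - Suc t) y))"
  define X where "X = ((lu - lw) * growth q kw n w * w - M2) / (2 * M1)"
  have J_eq: "J c = \<Psi> (modelA_step c (u, v, w)) - cost c - R" for c
  proof -
    have "(\<Sum>i<T. cost ((hs(t := c)) i)) = cost c + R"
      using \<open>t < T\<close> by (simp add: R_def sum.remove[of "{..<T}" t])
    then show ?thesis
      using \<open>t < T\<close> by (simp add: J_def objJ_eq_inner modelA_update_control state \<Psi>_def cost_def)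
  qed
  have "(\<Psi> has_derivative inner (lu, lv, lw)) (at (modelA_step (hs t) (u, v, w)))"
    using modelA_costate_gradient[where t = "Suc t" and T = T and h = hs and N = N] \<open>t < T\<close>
    by (simp add: \<Psi>_def costate state)
  from has_derivative_compose[OF has_derivative_modelA_step_control this]
  have "((\<lambda>c. \<Psi> (modelA_step c (u, v, w))) has_derivative
      (\<lambda>e. e * ((lu - lw) * w * growth q kw n w))) (at (hs t))"
    by (simp add: algebra_simps)
  then have "(J has_real_derivative (lu - lw) * growth q kw n w * w - (2 * M1 * hs t + M2))
      (at (hs t))"
    unfolding J_eq[abs_def] cost_def has_field_derivative_def
    by (rule has_derivative_eq_rhs[OF has_derivative_diff[OF has_derivative_diff]])
      (auto intro!: derivative_eq_intros simp: fun_eq_iff algebra_simps)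
  also have "(lu - lw) * growth q kw n w * w - (2 * M1 * hs t + M2) = 2 * M1 * (X - hs t)"
    using \<open>M1 > 0\<close> by (simp add: X_def field_simps)
  finally have "(J has_real_derivative 2 * M1 * (X - hs t)) (at (hs t))" .
  moreover have "J c \<le> J (hs t)" if "0 \<le> c" "c \<le> A" for c
    using opt hs that by (simp add: J_def controlset_def)
  moreover have "0 \<le> hs t" "hs t \<le> A"
    using hs \<open>t < T\<close> by (auto simp: controlset_def)
  ultimately show ?thesis
    unfolding X_def[symmetric] using \<open>M1 > 0\<close>
    by (intro interval_argmax_eq_clamp[where M = "2 * M1" and f = J]) simp_all
qed

end

end

theorem theorem1:
  fixes T :: nat and s ku m d1 d2 g q kw n A M1 M2 N u0 v0 w0 :: real
    and hs us vs ws :: "nat \<Rightarrow> real"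
  assumes "T \<ge> 1"
    and "s > 0" "ku > 0" "m > 0" "m < 1" "d1 > 0" "d2 > 0" "g > 0"
    and "q > 0" "kw > 0" "n > 0" "n < 1" "A > 0" "M1 > 0" "M2 \<ge> 0" "N > 0" "N < 1"
    and opt_in: "hs \<in> controlset T A"
    and opt: "\<forall>h \<in> controlset T A.
               objJ s ku m d1 d2 g q kw n u0 v0 w0 T N M1 M2 h
                 \<le> objJ s ku m d1 d2 g q kw n u0 v0 w0 T N M1 M2 hs"
    and us_def: "us = stU s ku m d1 d2 g q kw n u0 v0 w0 hs"
    and vs_def: "vs = stV s ku m d1 d2 g q kw n u0 v0 w0 hs"
    and ws_def: "ws = stW s ku m d1 d2 g q kw n u0 v0 w0 hs"
  shows "\<exists>lu lv lw :: nat \<Rightarrow> real.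
     lu T = 1 \<and> lv T = 0 \<and> lw T = N \<and>
     (\<forall>t<T.
        lu t = ((1 - d1 * vs t) * lu (t+1) + d2 * vs t * (1 - g) * lv (t+1)) * growth s ku m (us t)
               + (us t * (1 - d1 * vs t) * lu (t+1) + us t * d2 * vs t * (1 - g) * lv (t+1))
                 * (s / ku * (1 - us t / ku) - s / ku * (us t / ku - m)) \<and>
        lv t = - lu (t+1) * us t * growth s ku m (us t) * d1
               + lv (t+1) * (1 + us t * growth s ku m (us t) * d2) * (1 - g) \<and>
        lw t = (hs t * lu (t+1) + (1 - hs t) * lw (t+1)) * growth q kw n (ws t)
               + ws t * (hs t * lu (t+1) + (1 - hs t) * lw (t+1))
                 * (q / kw * (1 - ws t / kw) - q / kw * (ws t / kw - n))) \<and>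
     (\<forall>t<T. hs t = min A (max 0
        (((lu (t+1) - lw (t+1)) * growth q kw n (ws t) * ws t - M2) / (2 * M1))))"
proof -
  let ?costate = "modelA_costate s ku m d1 d2 g q kw n u0 v0 w0 hs T N"
  define lu lv lw where "lu t = fst (?costate t)" and "lv t = fst (snd (?costate t))"
    and "lw t = snd (snd (?costate t))" for t
  have costate: "?costate t = (lu t, lv t, lw t)" for t
    by (simp add: lu_def lv_def lw_def)
  have state: "modelA s ku m d1 d2 g q kw n u0 v0 w0 hs t = (us t, vs t, ws t)" for t
    by (simp add: us_def vs_def ws_def stU_def stV_def stW_def)
  have transversality: "(lu T, lv T, lw T) = (1, 0, N)"
    by (simp add: costate[symmetric] modelA_costate_terminal)
  have adjoint: "(lu t, lv t, lw t) = modelA_costep s ku m d1 d2 g q kw n (hs t)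
      (us t, vs t, ws t) (lu (t+1), lv (t+1), lw (t+1))" if "t < T" for t
    using that by (simp add: costate[symmetric] state[symmetric] modelA_costate_step)
  have control: "hs t = min A (max 0
      (((lu (t+1) - lw (t+1)) * growth q kw n (ws t) * ws t - M2) / (2 * M1)))" if "t < T" for t
    using modelA_optimal_control[OF \<open>M1 > 0\<close> opt_in opt that state costate] by simp
  show ?thesis
    using transversality adjoint control
    by (intro exI[of _ lu] exI[of _ lv] exI[of _ lw]) (auto simp: modelA_costep_def growth_deriv_def)
qed

end
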